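(* Let $d\ge1$ and $t\ge1$ be integers, $M\ge1$, $f:[0,1]^d\to\mathbb{R}$ any function, and let $b$, $a_i$, $b_{r,i}$, $\hat g_i$ be as produced by the construction described in the context. Then: (a) for any $i\in\{0,\dots,(t+1)^d-1\}$ and $j\in\{1,\dots,(t+1)^d-1\}$, $\hat g_j(\boldsymbol\pi^i/t)=a_j/t$ if $\pi^j_r\le\pi^i_r$ for all $r\in\{1,\dots,d\}$, and $\hat g_j(\boldsymbol\pi^i/t)=0$ otherwise; (b) for every $i\in\{1,\dots,(t+1)^d-1\}$, $b+\sum_{j=1}^{i}\hat g_j(\boldsymbol\pi^i/t)=f(\boldsymbol\pi^i/t)$.
   Context: Let $\sigma(z)=\max(z,0)$ and $k=(t+1)^d$. For an integer $0\le i\le k-1$ let $\boldsymbol\pi^i=(\pi^i_1,\dots,\pi^i_d)$ be its base-$(t+1)$ digit vector, i.e. $0\le\pi^i_r\le t$ and $i=\sum_{r=1}^d\pi^i_r(t+1)^{d-r}$. For parameters $a_j,b_{1,j},\dots,b_{d,j}$ define $\hat g_j(\mathbf{x})=a_j\,\sigma\big(\sum_{r=1}^d -M\sigma(-x_r+b_{r,j})+\tfrac1t\big)$. Construction: set $b=f(\mathbf{0})$; for $i=1,\dots,k-1$ in order: let $\hat y=b+\sum_{j=1}^{i-1}\hat g_j(\boldsymbol\pi^i/t)$, set $b_{r,i}=\pi^i_r/t$ for $r=1,\dots,d$, and set $a_i=t\big(f(\boldsymbol\pi^i/t)-\hat y\big)$. *)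

theory Defs
  imports Complex_Main
begin

definition relu :: "real \<Rightarrow> real" where
  "relu z = max z 0"

text \<open>r-th base-(t+1) digit (r = 1..d, most significant first) of i:
  i = sum_{r=1}^d pi_r (t+1)^(d-r).\<close>
definition digit :: "nat \<Rightarrow> nat \<Rightarrow> nat \<Rightarrow> nat \<Rightarrow> nat" where
  "digit d t i r = (i div (t+1)^(d-r)) mod (t+1)"

text \<open>Grid point pi^i / t in [0,1]^d; points of R^d are functions nat => real
  with coordinates indexed by 1..d (other coordinates set to 0).\<close>
definition gridpt :: "nat \<Rightarrow> nat \<Rightarrow> nat \<Rightarrow> (nat \<Rightarrow> real)" where
  "gridpt d t i = (\<lambda>r. if 1 \<le> r \<and> r \<le> d then real (digit d t i r) / real t else 0)"

text \<open>ghat_j(x) = a_j * sigma(sum_{r=1}^d -M sigma(-x_r + b_{r,j}) + 1/t),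
  where bv r = b_{r,j}.\<close>
definition ghat :: "nat \<Rightarrow> nat \<Rightarrow> real \<Rightarrow> real \<Rightarrow> (nat \<Rightarrow> real) \<Rightarrow> (nat \<Rightarrow> real) \<Rightarrow> real" where
  "ghat d t M a bv x = a * relu ((\<Sum>r=1..d. - M * relu (- x r + bv r)) + 1 / real t)"

end

theory Submission
  imports Defs
begin

text \<open>On the grid the inner ReLU terms of \<open>ghat\<close> are multiples of \<open>1/t\<close>: they all vanish when
  the grid point dominates \<open>\<pi>\<^sup>j/t\<close> coordinatewise, and otherwise one of them is at least \<open>1/t\<close>,
  which (as \<open>M \<ge> 1\<close>) cancels the offset \<open>1/t\<close> under the outer ReLU. So \<open>ghat\<^sub>j\<close> is \<open>a\<^sub>j/t\<close>
  times the indicator of dominance; as \<open>\<pi>\<^sup>i\<close> dominates itself, the \<open>i\<close>-th summand at \<open>\<pi>\<^sup>i/t\<close>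
  is \<open>a\<^sub>i/t\<close>, exactly the residual that \<open>a\<^sub>i\<close> was chosen to correct.\<close>

lemma relu_grid_diff_eq_0:
  fixes p q :: int and t :: real
  assumes "t > 0" and "q \<le> p"
  shows "relu (- (p / t) + q / t) = 0"
proof -
  have "q / t \<le> p / t"
    using assms by (simp add: divide_right_mono)
  then show ?thesis
    by (simp add: relu_def)
qed

lemma relu_grid_diff_ge:
  fixes p q :: int and t :: real
  assumes "t > 0" and "p < q"
  shows "relu (- (p / t) + q / t) \<ge> 1 / t"
proof -
  have "(p + 1) / t \<le> q / t"
    using assms by (simp add: divide_right_mono)
  then show ?thesis
    by (simp add: relu_def add_divide_distrib)
qed

lemma relu_grid_penalty:
  fixes p q :: "'i \<Rightarrow> int" and R :: "'i set" and t M :: real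
  assumes "finite R" and "t > 0" and "M \<ge> 1"
  shows "relu ((\<Sum>r\<in>R. - M * relu (- (p r / t) + q r / t)) + 1 / t)
    = (if \<forall>r\<in>R. q r \<le> p r then 1 / t else 0)"
proof (cases "\<forall>r\<in>R. q r \<le> p r")
  case True
  then have "(\<Sum>r\<in>R. - M * relu (- (p r / t) + q r / t)) = 0"
    using relu_grid_diff_eq_0[OF \<open>t > 0\<close>] by (intro sum.neutral) simp
  with True \<open>t > 0\<close> show ?thesis
    by (simp add: relu_def)
next
  case False
  then obtain r0 where r0: "r0 \<in> R" "p r0 < q r0"
    by (auto simp: not_le)
  let ?g = "\<lambda>r. - M * relu (- (p r / t) + q r / t)"
  have "M * relu (- (p r0 / t) + q r0 / t) \<ge> 1 * (1 / t)"
    using relu_grid_diff_ge[OF \<open>t > 0\<close> \<open>p r0 < q r0\<close>] \<open>M \<ge> 1\<close> \<open>t > 0\<close> by (intro mult_mono) auto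
  then have "?g r0 \<le> - (1 / t)"
    by simp
  moreover have "(\<Sum>r\<in>R - {r0}. ?g r) \<le> 0"
    using \<open>M \<ge> 1\<close> by (intro sum_nonpos) (simp add: relu_def)
  ultimately have "(\<Sum>r\<in>R. ?g r) + 1 / t \<le> 0"
    using r0 \<open>finite R\<close> by (simp add: sum.remove)
  then have "relu ((\<Sum>r\<in>R. ?g r) + 1 / t) = 0"
    by (simp add: relu_def)
  then show ?thesis
    by (simp only: if_not_P[OF False])
qed

lemma ghat_gridpt:
  assumes "t \<ge> 1" and "M \<ge> 1"
    and bv: "\<forall>r\<in>{1..d}. bv r = real (digit d t j r) / real t"
  shows "ghat d t M c bv (gridpt d t i)
    = (if \<forall>r\<in>{1..d}. digit d t j r \<le> digit d t i r then c / real t else 0)"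
proof -
  have "(\<Sum>r=1..d. - M * relu (- gridpt d t i r + bv r))
      = (\<Sum>r=1..d. - M * relu (- (of_int (int (digit d t i r)) / real t)
                              + of_int (int (digit d t j r)) / real t))"
    using bv by (intro sum.cong) (auto simp: gridpt_def)
  then show ?thesis
    using relu_grid_penalty[of "{1..d}" "real t" M "\<lambda>r. int (digit d t i r)" "\<lambda>r. int (digit d t j r)"]
      assms(1,2) by (simp add: ghat_def)
qed

theorem propositionA5:
  fixes d t :: nat and M :: real and f :: "(nat \<Rightarrow> real) \<Rightarrow> real"
    and b :: real and a :: "nat \<Rightarrow> real" and bb :: "nat \<Rightarrow> nat \<Rightarrow> real"
  assumes "d \<ge> 1" and "t \<ge> 1" and "M \<ge> 1"
    and hb: "b = f (gridpt d t 0)"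
    and hbb: "\<forall>i\<in>{1..<(t+1)^d}. \<forall>r\<in>{1..d}. bb r i = real (digit d t i r) / real t"
    and ha: "\<forall>i\<in>{1..<(t+1)^d}. a i = real t * (f (gridpt d t i)
               - (b + (\<Sum>j=1..<i. ghat d t M (a j) (\<lambda>r. bb r j) (gridpt d t i))))"
  shows "(\<forall>i<(t+1)^d. \<forall>j\<in>{1..<(t+1)^d}.
            ghat d t M (a j) (\<lambda>r. bb r j) (gridpt d t i) =
              (if (\<forall>r\<in>{1..d}. digit d t j r \<le> digit d t i r) then a j / real t else 0))
       \<and> (\<forall>i\<in>{1..<(t+1)^d}.
            b + (\<Sum>j=1..i. ghat d t M (a j) (\<lambda>r. bb r j) (gridpt d t i)) = f (gridpt d t i))"
proof (intro conjI ballI allI impI)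
  fix i j assume "j \<in> {1..<(t+1)^d}"
  then show "ghat d t M (a j) (\<lambda>r. bb r j) (gridpt d t i) =
      (if (\<forall>r\<in>{1..d}. digit d t j r \<le> digit d t i r) then a j / real t else 0)"
    using ghat_gridpt[OF assms(2,3), where bv="\<lambda>r. bb r j" and j=j] hbb by simp
next
  fix i assume i: "i \<in> {1..<(t+1)^d}"
  let ?S = "\<lambda>J. \<Sum>j\<in>J. ghat d t M (a j) (\<lambda>r. bb r j) (gridpt d t i)"
  have "?S {1..i} = ?S {1..<i} + a i / real t"
    using i ghat_gridpt[OF assms(2,3), where bv="\<lambda>r. bb r i" and j=i and i=i] hbb
    by (simp add: atLeastLessThanSuc_atLeastAtMost[symmetric] sum.atLeastLessThan_Suc)
  also have "a i / real t = f (gridpt d t i) - (b + ?S {1..<i})"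
    using ha i \<open>t \<ge> 1\<close> by simp
  finally show "b + ?S {1..i} = f (gridpt d t i)"
    by simp
qed

end
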